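(* Let $\mathcal{H}$ be a Hilbert space with inner product $[\cdot,\cdot]$, let $K(\mathcal{H})$ be the $C^*$-algebra of compact operators on $\mathcal{H}$, and let $\mathcal{E}$ be a Hilbert $K(\mathcal{H})$-module. Let $x, y \in \mathcal{E}$. Then the following are equivalent: (i) $x \parallel y$; (ii) there exists a unit vector $\xi \in \mathcal{H}$ such that $$\big|[\langle x, x\rangle \langle x, y\rangle \xi, \xi]\big| = \|x\|^3\|y\|.$$
   Context: A (left) Hilbert $K(\mathcal{H})$-module is a left $K(\mathcal{H})$-module $\mathcal{E}$ with a $K(\mathcal{H})$-valued inner product $\langle\cdot,\cdot\rangle$, linear in the first variable and conjugate linear in the second, satisfying $\langle x,x\rangle\ge 0$ with equality iff $x=0$, $\langle ax,y\rangle = a\langle x,y\rangle$ and $\langle x,y\rangle^*=\langle y,x\rangle$, and complete for the norm $\|x\|=\|\langle x,x\rangle\|^{1/2}$. For elements $x,y$ of a normed space, $x$ is norm-parallel to $y$, written $x\parallel y$, if $\|x+\lambda y\| = \|x\|+\|y\|$ for some $\lambda\in\mathbb{T}=\{\alpha\in\mathbb{C}: |\alpha|=1\}$. *)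

theory Defs
  imports Complex_Main
begin

definition pre_hilbert_space ::
  "(complex \<Rightarrow> 'h::ab_group_add \<Rightarrow> 'h) \<Rightarrow> ('h \<Rightarrow> 'h \<Rightarrow> complex) \<Rightarrow> bool" where
  "pre_hilbert_space sc ip \<longleftrightarrow>
     vector_space sc \<and>
     (\<forall>u v w. ip (u + v) w = ip u w + ip v w) \<and>
     (\<forall>c u v. ip (sc c u) v = c * ip u v) \<and>
     (\<forall>u v. ip v u = cnj (ip u v)) \<and>
     (\<forall>u. Im (ip u u) = 0 \<and> 0 \<le> Re (ip u u)) \<and>
     (\<forall>u. ip u u = 0 \<longleftrightarrow> u = 0)"

definition ipnorm :: "('h \<Rightarrow> 'h \<Rightarrow> complex) \<Rightarrow> 'h \<Rightarrow> real" where
  "ipnorm ip u = sqrt (Re (ip u u))"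

definition cauchy_wrt :: "('a::ab_group_add \<Rightarrow> real) \<Rightarrow> (nat \<Rightarrow> 'a) \<Rightarrow> bool" where
  "cauchy_wrt nrm X \<longleftrightarrow> (\<forall>e>0. \<exists>N. \<forall>m\<ge>N. \<forall>k\<ge>N. nrm (X m - X k) < e)"

definition converges_wrt :: "('a::ab_group_add \<Rightarrow> real) \<Rightarrow> (nat \<Rightarrow> 'a) \<Rightarrow> 'a \<Rightarrow> bool" where
  "converges_wrt nrm X l \<longleftrightarrow> (\<forall>e>0. \<exists>N. \<forall>k\<ge>N. nrm (X k - l) < e)"

definition complete_wrt :: "('a::ab_group_add \<Rightarrow> real) \<Rightarrow> bool" where
  "complete_wrt nrm \<longleftrightarrow> (\<forall>X. cauchy_wrt nrm X \<longrightarrow> (\<exists>l. converges_wrt nrm X l))"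

definition hilbert_space ::
  "(complex \<Rightarrow> 'h::ab_group_add \<Rightarrow> 'h) \<Rightarrow> ('h \<Rightarrow> 'h \<Rightarrow> complex) \<Rightarrow> bool" where
  "hilbert_space sc ip \<longleftrightarrow> pre_hilbert_space sc ip \<and> complete_wrt (ipnorm ip)"

definition bounded_op ::
  "(complex \<Rightarrow> 'h::ab_group_add \<Rightarrow> 'h) \<Rightarrow> ('h \<Rightarrow> 'h \<Rightarrow> complex) \<Rightarrow> ('h \<Rightarrow> 'h) \<Rightarrow> bool" where
  "bounded_op sc ip T \<longleftrightarrow>
     (\<forall>u v. T (u + v) = T u + T v) \<and> (\<forall>c u. T (sc c u) = sc c (T u)) \<and>
     (\<exists>K. \<forall>u. ipnorm ip (T u) \<le> K * ipnorm ip u)"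

definition opnorm :: "('h \<Rightarrow> 'h \<Rightarrow> complex) \<Rightarrow> ('h \<Rightarrow> 'h) \<Rightarrow> real" where
  "opnorm ip T = Sup {ipnorm ip (T u) | u. ipnorm ip u \<le> 1}"

definition compact_op ::
  "(complex \<Rightarrow> 'h::ab_group_add \<Rightarrow> 'h) \<Rightarrow> ('h \<Rightarrow> 'h \<Rightarrow> complex) \<Rightarrow> ('h \<Rightarrow> 'h) \<Rightarrow> bool" where
  "compact_op sc ip T \<longleftrightarrow> bounded_op sc ip T \<and>
     (\<forall>X. (\<exists>B. \<forall>n. ipnorm ip (X n) \<le> B) \<longrightarrow>
          (\<exists>(r::nat \<Rightarrow> nat) l. strict_mono r \<and> converges_wrt (ipnorm ip) (\<lambda>n. T (X (r n))) l))"

definition positive_op :: "('h \<Rightarrow> 'h \<Rightarrow> complex) \<Rightarrow> ('h \<Rightarrow> 'h) \<Rightarrow> bool" where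
  "positive_op ip T \<longleftrightarrow> (\<forall>u. Im (ip (T u) u) = 0 \<and> 0 \<le> Re (ip (T u) u))"

definition is_adjoint :: "('h \<Rightarrow> 'h \<Rightarrow> complex) \<Rightarrow> ('h \<Rightarrow> 'h) \<Rightarrow> ('h \<Rightarrow> 'h) \<Rightarrow> bool" where
  "is_adjoint ip T S \<longleftrightarrow> (\<forall>u v. ip (T u) v = ip u (S v))"

definition module_norm :: "('h \<Rightarrow> 'h \<Rightarrow> complex) \<Rightarrow> ('e \<Rightarrow> 'e \<Rightarrow> ('h \<Rightarrow> 'h)) \<Rightarrow> 'e \<Rightarrow> real" where
  "module_norm ip ipE x = sqrt (opnorm ip (ipE x x))"

definition hilbert_KH_module ::
  "(complex \<Rightarrow> 'h::ab_group_add \<Rightarrow> 'h) \<Rightarrow> ('h \<Rightarrow> 'h \<Rightarrow> complex) \<Rightarrow>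
   (complex \<Rightarrow> 'e::ab_group_add \<Rightarrow> 'e) \<Rightarrow> (('h \<Rightarrow> 'h) \<Rightarrow> 'e \<Rightarrow> 'e) \<Rightarrow>
   ('e \<Rightarrow> 'e \<Rightarrow> ('h \<Rightarrow> 'h)) \<Rightarrow> bool" where
  "hilbert_KH_module sc ip scE act ipE \<longleftrightarrow>
     vector_space scE \<and>
     \<comment> \<open>left K(H)-module structure, compatible with complex scalars\<close>
     (\<forall>a b x. compact_op sc ip a \<longrightarrow> compact_op sc ip b \<longrightarrow> act (a \<circ> b) x = act a (act b x)) \<and>
     (\<forall>a b x. compact_op sc ip a \<longrightarrow> compact_op sc ip b \<longrightarrow>
        act (\<lambda>u. a u + b u) x = act a x + act b x) \<and>
     (\<forall>a x y. compact_op sc ip a \<longrightarrow> act a (x + y) = act a x + act a y) \<and>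
     (\<forall>a c x. compact_op sc ip a \<longrightarrow>
        scE c (act a x) = act (\<lambda>u. sc c (a u)) x \<and> scE c (act a x) = act a (scE c x)) \<and>
     \<comment> \<open>K(H)-valued inner product\<close>
     (\<forall>x y. compact_op sc ip (ipE x y)) \<and>
     (\<forall>x y z. ipE (x + y) z = (\<lambda>u. ipE x z u + ipE y z u)) \<and>
     (\<forall>c x y. ipE (scE c x) y = (\<lambda>u. sc c (ipE x y u))) \<and>
     (\<forall>a x y. compact_op sc ip a \<longrightarrow> ipE (act a x) y = a \<circ> ipE x y) \<and>
     (\<forall>x y. is_adjoint ip (ipE x y) (ipE y x)) \<and>
     (\<forall>x. positive_op ip (ipE x x)) \<and>
     (\<forall>x. ipE x x = (\<lambda>u. 0) \<longleftrightarrow> x = 0) \<and>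
     complete_wrt (module_norm ip ipE)"

definition norm_parallel :: "(complex \<Rightarrow> 'e::ab_group_add \<Rightarrow> 'e) \<Rightarrow> ('e \<Rightarrow> real) \<Rightarrow> 'e \<Rightarrow> 'e \<Rightarrow> bool" where
  "norm_parallel sc nrm x y \<longleftrightarrow> (\<exists>t. cmod t = 1 \<and> nrm (x + sc t y) = nrm x + nrm y)"

end

theory Submission
  imports Defs
begin

(* For a unit vector xi, the vector state omega(u, v) = [<u,v> xi, xi] (state_form xi) is a
   positive Hermitian form on E with omega(u, u) <= ||u||^2, and since <u,u> is a positive
   operator, ||u||^2 is the supremum of these values. If ||x + t y|| = ||x|| + ||y||, the compact
   positive operator <z,z>, z = x + t y, attains its norm in such a state; Cauchy-Schwarz for
   omega then forces omega(x, x) = ||x||^2 and |omega(x, y)| = ||x|| ||y||. The first identity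
   makes xi an eigenvector of <x,x> for the eigenvalue ||x||^2, so
   [<x,x><x,y> xi, xi] = ||x||^2 omega(x, y).
   Conversely, Cauchy-Schwarz for omega applied to w = <x,x> x and y bounds
   |[<x,x><x,y> xi, xi]| by ||x|| ||<x,x> xi|| ||y||, so equality forces
   ||<x,x> xi|| = ||<x,x>||, which again makes xi an eigenvector; then
   |omega(x, y)| = ||x|| ||y||, and taking t to be the phase of omega(x, y) gives
   omega(x + t y, x + t y) >= (||x|| + ||y||)^2. *)

locale hermitian_form =
  fixes s :: "complex \<Rightarrow> 'a::ab_group_add \<Rightarrow> 'a" and f :: "'a \<Rightarrow> 'a \<Rightarrow> complex"
  assumes add_left: "f (u + v) w = f u w + f v w"
    and scale_left: "f (s c u) v = c * f u v"
    and hermitian: "f v u = cnj (f u v)"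
begin

lemma zero_left [simp]: "f 0 v = 0"
  using add_left[of 0 0 v] by simp

lemma add_right: "f u (v + w) = f u v + f u w"
  using hermitian[of u "v + w"] hermitian[of u v] hermitian[of u w] add_left[of v w u] by simp

lemma scale_right: "f u (s c v) = cnj c * f u v"
  using hermitian[of u "s c v"] hermitian[of u v] scale_left[of c v u] by simp

lemma Re_add_scale:
  "Re (f (u + s c v) (u + s c v)) = Re (f u u) + 2 * Re (cnj c * f u v) + (cmod c)^2 * Re (f v v)"
proof -
  have "f (u + s c v) (u + s c v) = f u u + cnj c * f u v + c * cnj (f u v) + c * cnj c * f v v"
    by (simp add: add_left add_right scale_left scale_right hermitian[of u v] algebra_simps)
  moreover have "c * cnj c = complex_of_real ((cmod c)^2)"
    by (rule complex_norm_square[symmetric])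
  moreover have "Re (c * cnj (f u v)) = Re (cnj c * f u v)"
    by simp
  ultimately show ?thesis
    by (simp add: mult.assoc[symmetric])
qed

end

locale positive_hermitian_form = hermitian_form +
  assumes Re_nonneg: "0 \<le> Re (f u u)"
begin

lemma Cauchy_Schwarz: "(cmod (f u v))^2 \<le> Re (f u u) * Re (f v v)"
proof -
  define P Q R where "P = Re (f u u)" and "Q = (cmod (f u v))^2" and "R = Re (f v v)"
  have quadratic_nonneg: "0 \<le> P - 2 * t * Q + t^2 * Q * R" for t :: real
  proof -
    define c where "c = - (complex_of_real t * f u v)"
    have "0 \<le> Re (f (u + s c v) (u + s c v))"
      by (rule Re_nonneg)
    also have "\<dots> = P + 2 * Re (cnj c * f u v) + (cmod c)^2 * R"
      unfolding P_def R_def by (rule Re_add_scale)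
    also have "Re (cnj c * f u v) = - t * Q"
    proof -
      have "cnj (f u v) * f u v = complex_of_real Q"
        using complex_norm_square[of "f u v"] by (simp add: Q_def mult.commute)
      then show ?thesis
        by (simp add: c_def mult.assoc)
    qed
    also have "(cmod c)^2 = t^2 * Q"
      by (simp add: c_def Q_def norm_mult power_mult_distrib)
    finally show ?thesis
      by (simp add: algebra_simps)
  qed
  have "0 \<le> P" "0 \<le> R" "0 \<le> Q"
    using Re_nonneg by (simp_all add: P_def R_def Q_def)
  show ?thesis
  proof (cases "R = 0")
    case True
    have "Q = 0"
    proof (rule ccontr)
      assume "Q \<noteq> 0"
      then show False
        using quadratic_nonneg[of "(P + 1) / Q"] \<open>0 \<le> P\<close> \<open>0 \<le> Q\<close> True by simp
    qed
    then show ?thesis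
      using \<open>0 \<le> P\<close> True by (simp add: P_def Q_def R_def)
  next
    case False
    with \<open>0 \<le> R\<close> have "0 < R" by simp
    have "0 \<le> P - 2 * (1 / R) * Q + (1 / R)^2 * Q * R"
      by (rule quadratic_nonneg)
    also have "\<dots> = P - Q / R"
      using \<open>0 < R\<close> by (simp add: field_simps power2_eq_square)
    finally show ?thesis
      using \<open>0 < R\<close> by (simp add: P_def Q_def R_def divide_le_eq mult.commute)
  qed
qed

lemma extremal_if_Re_add_scale_eq:
  assumes "Re (f u u) \<le> a^2" and "Re (f v v) \<le> b^2" and "0 \<le> a" and "0 \<le> b" and "cmod c = 1"
    and "Re (f (u + s c v) (u + s c v)) = (a + b)^2"
  shows "Re (f u u) = a^2" and "cmod (f u v) = a * b"
proof -
  define p q where "p = sqrt (Re (f u u))" and "q = sqrt (Re (f v v))"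
  have "0 \<le> p" "0 \<le> q" "p^2 = Re (f u u)" "q^2 = Re (f v v)"
    using Re_nonneg by (simp_all add: p_def q_def)
  have "p \<le> a"
    by (rule power2_le_imp_le) (use \<open>p^2 = Re (f u u)\<close> assms(1,3) in simp_all)
  have "q \<le> b"
    by (rule power2_le_imp_le) (use \<open>q^2 = Re (f v v)\<close> assms(2,4) in simp_all)
  have "Re (cnj c * f u v) \<le> cmod (f u v)"
    using complex_Re_le_cmod[of "cnj c * f u v"] \<open>cmod c = 1\<close> by (simp add: norm_mult)
  also have "cmod (f u v) \<le> p * q"
  proof (rule power2_le_imp_le)
    show "(cmod (f u v))^2 \<le> (p * q)^2"
      using Cauchy_Schwarz[of u v] \<open>p^2 = Re (f u u)\<close> \<open>q^2 = Re (f v v)\<close>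
      by (simp add: power_mult_distrib)
  qed (simp add: \<open>0 \<le> p\<close> \<open>0 \<le> q\<close>)
  finally have "(a + b)^2 \<le> (p + q)^2"
    using Re_add_scale[of u c v] assms(5,6) \<open>p^2 = Re (f u u)\<close> \<open>q^2 = Re (f v v)\<close>
    by (simp add: power2_sum)
  then have "a + b \<le> p + q"
    by (rule power2_le_imp_le) (simp add: \<open>0 \<le> p\<close> \<open>0 \<le> q\<close>)
  then have "p = a" "q = b"
    using \<open>p \<le> a\<close> \<open>q \<le> b\<close> by linarith+
  then show "Re (f u u) = a^2"
    using \<open>p^2 = Re (f u u)\<close> by simp
  have "a * b \<le> cmod (f u v)"
    using Re_add_scale[of u c v] assms(5,6) \<open>Re (cnj c * f u v) \<le> cmod (f u v)\<close>
      \<open>p = a\<close> \<open>q = b\<close> \<open>p^2 = Re (f u u)\<close> \<open>q^2 = Re (f v v)\<close>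
    by (simp add: power2_sum)
  with \<open>cmod (f u v) \<le> p * q\<close> \<open>p = a\<close> \<open>q = b\<close> show "cmod (f u v) = a * b"
    by simp
qed

lemma Re_add_sgn_scale:
  assumes "f u v \<noteq> 0"
  shows "Re (f (u + s (sgn (f u v)) v) (u + s (sgn (f u v)) v))
           = Re (f u u) + 2 * cmod (f u v) + Re (f v v)"
proof -
  have "cnj (sgn (f u v)) * f u v = f u v * cnj (f u v) / complex_of_real (cmod (f u v))"
    by (simp add: sgn_eq mult.commute)
  also have "\<dots> = complex_of_real (cmod (f u v))"
    using assms by (simp add: complex_norm_square[symmetric] power2_eq_square)
  finally have "cnj (sgn (f u v)) * f u v = complex_of_real (cmod (f u v))" .
  then show ?thesis
    using assms by (simp add: Re_add_scale norm_sgn)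
qed

end

locale pre_hilbert =
  fixes sc :: "complex \<Rightarrow> 'h::ab_group_add \<Rightarrow> 'h" and ip :: "'h \<Rightarrow> 'h \<Rightarrow> complex"
  assumes pre_hilbert_space: "pre_hilbert_space sc ip"

sublocale pre_hilbert \<subseteq> M: module sc
  using pre_hilbert_space unfolding pre_hilbert_space_def module_iff_vector_space by simp

sublocale pre_hilbert \<subseteq> ip: positive_hermitian_form sc ip
  using pre_hilbert_space unfolding pre_hilbert_space_def by unfold_locales blast+

context pre_hilbert
begin

lemma ip_self_eq_0_iff: "ip u u = 0 \<longleftrightarrow> u = 0"
  using pre_hilbert_space unfolding pre_hilbert_space_def by blast

lemma ipnorm_nonneg: "0 \<le> ipnorm ip u"
  using ip.Re_nonneg[of u] by (simp add: ipnorm_def)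

lemma ipnorm_power2: "(ipnorm ip u)^2 = Re (ip u u)"
  using ip.Re_nonneg[of u] by (simp add: ipnorm_def)

lemma ip_self: "ip u u = complex_of_real ((ipnorm ip u)^2)"
  using ip.hermitian[of u u] by (simp add: ipnorm_power2 complex_eq_iff)

lemma cmod_ip_self: "cmod (ip u u) = (ipnorm ip u)^2"
  unfolding ip_self norm_of_real by simp

lemma ipnorm_eq_0_iff: "ipnorm ip u = 0 \<longleftrightarrow> u = 0"
  using ip_self[of u] ip_self_eq_0_iff[of u] by auto

lemma ipnorm_pos: "u \<noteq> 0 \<Longrightarrow> 0 < ipnorm ip u"
  using ipnorm_nonneg[of u] ipnorm_eq_0_iff[of u] by simp

lemma ipnorm_zero [simp]: "ipnorm ip 0 = 0"
  by (simp add: ipnorm_eq_0_iff)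

lemma cmod_ip_le: "cmod (ip u v) \<le> ipnorm ip u * ipnorm ip v"
proof (rule power2_le_imp_le)
  show "(cmod (ip u v))^2 \<le> (ipnorm ip u * ipnorm ip v)^2"
    using ip.Cauchy_Schwarz[of u v] by (simp add: ipnorm_power2 power_mult_distrib)
qed (simp add: ipnorm_nonneg)

lemma ipnorm_add_scale_power2:
  "(ipnorm ip (u + sc c v))^2
     = (ipnorm ip u)^2 + 2 * Re (cnj c * ip u v) + (cmod c)^2 * (ipnorm ip v)^2"
  unfolding ipnorm_power2 by (rule ip.Re_add_scale)

lemma ipnorm_scale: "ipnorm ip (sc c u) = cmod c * ipnorm ip u"
proof (rule power2_eq_imp_eq)
  show "(ipnorm ip (sc c u))^2 = (cmod c * ipnorm ip u)^2"
    using ipnorm_add_scale_power2[of 0 c u] by (simp add: power_mult_distrib)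
qed (simp_all add: ipnorm_nonneg)

lemma ipnorm_normalize: "u \<noteq> 0 \<Longrightarrow> ipnorm ip (sc (complex_of_real (1 / ipnorm ip u)) u) = 1"
  using ipnorm_pos[of u] by (simp add: ipnorm_scale norm_divide)

lemma ipnorm_triangle: "ipnorm ip (u + v) \<le> ipnorm ip u + ipnorm ip v"
proof (rule power2_le_imp_le)
  have "Re (ip u v) \<le> ipnorm ip u * ipnorm ip v"
    using cmod_ip_le[of u v] complex_Re_le_cmod[of "ip u v"] by linarith
  then show "(ipnorm ip (u + v))^2 \<le> (ipnorm ip u + ipnorm ip v)^2"
    using ipnorm_add_scale_power2[of u 1 v] by (simp add: power2_sum)
qed (simp add: ipnorm_nonneg)

lemma ipnorm_minus_commute: "ipnorm ip (u - v) = ipnorm ip (v - u)"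
  using ipnorm_scale[of "-1" "u - v"] by simp

lemma ipnorm_diff_triangle: "ipnorm ip (u - w) \<le> ipnorm ip (u - v) + ipnorm ip (v - w)"
  using ipnorm_triangle[of "u - v" "v - w"] by simp

lemma ipnorm_diff_ge: "\<bar>ipnorm ip u - ipnorm ip v\<bar> \<le> ipnorm ip (u - v)"
  using ipnorm_triangle[of "u - v" v] ipnorm_triangle[of "v - u" u] ipnorm_minus_commute[of u v]
  by (simp add: abs_le_iff)

lemma opnorm_least:
  assumes "\<And>u. ipnorm ip u \<le> 1 \<Longrightarrow> ipnorm ip (T u) \<le> M"
  shows "opnorm ip T \<le> M"
proof -
  have "ipnorm ip (0::'h) \<le> 1"
    by simp
  then show ?thesis
    unfolding opnorm_def by (intro cSup_least) (use assms in blast)+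
qed

context
  fixes T assumes bounded: "bounded_op sc ip T"
begin

lemma bounded_op_add: "T (u + v) = T u + T v"
  and bounded_op_scale: "T (sc c u) = sc c (T u)"
  using bounded unfolding bounded_op_def by auto

lemma bounded_op_zero [simp]: "T 0 = 0"
  using bounded_op_scale[of 0 0] by simp

lemma bounded_op_diff: "T (u - v) = T u - T v"
  using bounded_op_add[of "u - v" v] by (simp add: algebra_simps)

lemma opnorm_upper: "ipnorm ip u \<le> 1 \<Longrightarrow> ipnorm ip (T u) \<le> opnorm ip T"
proof -
  obtain K where K: "\<And>u. ipnorm ip (T u) \<le> K * ipnorm ip u"
    using bounded unfolding bounded_op_def by auto
  have "ipnorm ip (T v) \<le> max K 0" if "ipnorm ip v \<le> 1" for v
    using K[of v] that ipnorm_nonneg[of v]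
    by (smt (verit) mult_left_le mult_right_mono max.cobounded1 max.cobounded2)
  then have "bdd_above {ipnorm ip (T u) | u. ipnorm ip u \<le> 1}"
    unfolding bdd_above_def by blast
  then show "ipnorm ip u \<le> 1 \<Longrightarrow> ipnorm ip (T u) \<le> opnorm ip T"
    unfolding opnorm_def by (rule cSup_upper[rotated]) blast
qed

lemma opnorm_nonneg: "0 \<le> opnorm ip T"
  using opnorm_upper[of 0] by simp

lemma ipnorm_apply_le: "ipnorm ip (T u) \<le> opnorm ip T * ipnorm ip u"
proof (cases "u = 0")
  case False
  define v where "v = sc (complex_of_real (1 / ipnorm ip u)) u"
  have "ipnorm ip (T v) \<le> opnorm ip T"
    using ipnorm_normalize[OF False] by (intro opnorm_upper) (simp add: v_def)
  moreover have "ipnorm ip (T v) = ipnorm ip (T u) / ipnorm ip u"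
    using ipnorm_pos[OF False] by (simp add: v_def bounded_op_scale ipnorm_scale norm_divide)
  ultimately show ?thesis
    using ipnorm_pos[OF False] by (simp add: divide_le_eq)
qed simp

lemma Re_ip_apply_le: "Re (ip (T u) u) \<le> opnorm ip T * (ipnorm ip u)^2"
proof -
  have "Re (ip (T u) u) \<le> ipnorm ip (T u) * ipnorm ip u"
    using complex_Re_le_cmod[of "ip (T u) u"] cmod_ip_le[of "T u" u] by linarith
  also have "\<dots> \<le> opnorm ip T * ipnorm ip u * ipnorm ip u"
    by (rule mult_right_mono[OF ipnorm_apply_le ipnorm_nonneg])
  finally show ?thesis
    by (simp add: power2_eq_square mult.assoc)
qed

lemma approximate_eigenvector_defect:
  assumes "ipnorm ip \<eta> = 1"
  shows "ipnorm ip (T l - sc c l)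
           \<le> (opnorm ip T + cmod c) * (ipnorm ip (T \<eta> - l) + ipnorm ip (T \<eta> - sc c \<eta>))"
    and "\<bar>ipnorm ip l - cmod c\<bar> \<le> ipnorm ip (T \<eta> - l) + ipnorm ip (T \<eta> - sc c \<eta>)"
proof -
  define d where "d = ipnorm ip (T \<eta> - l) + ipnorm ip (T \<eta> - sc c \<eta>)"
  have l_near: "ipnorm ip (l - sc c \<eta>) \<le> d"
    using ipnorm_diff_triangle[of l "sc c \<eta>" "T \<eta>"] ipnorm_minus_commute[of l "T \<eta>"]
    by (simp add: d_def)
  have "T l - T (sc c \<eta>) = T (l - sc c \<eta>)" and "T (sc c \<eta>) - sc c l = sc c (T \<eta> - l)"
    by (simp_all add: bounded_op_diff bounded_op_scale M.scale_right_diff_distrib)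
  then have "ipnorm ip (T l - sc c l) \<le> ipnorm ip (T (l - sc c \<eta>)) + ipnorm ip (sc c (T \<eta> - l))"
    using ipnorm_diff_triangle[of "T l" "sc c l" "T (sc c \<eta>)"] by simp
  also have "\<dots> \<le> opnorm ip T * d + cmod c * d"
  proof (rule add_mono)
    show "ipnorm ip (T (l - sc c \<eta>)) \<le> opnorm ip T * d"
      using ipnorm_apply_le[of "l - sc c \<eta>"] mult_left_mono[OF l_near opnorm_nonneg] by linarith
    show "ipnorm ip (sc c (T \<eta> - l)) \<le> cmod c * d"
      unfolding ipnorm_scale d_def using ipnorm_nonneg by (intro mult_left_mono) simp_all
  qed
  finally show "ipnorm ip (T l - sc c l) \<le> (opnorm ip T + cmod c) * d"
    by (simp add: algebra_simps)
  have "\<bar>ipnorm ip l - cmod c\<bar> \<le> ipnorm ip (l - sc c \<eta>)"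
    using ipnorm_diff_ge[of l "sc c \<eta>"] assms by (simp add: ipnorm_scale)
  with l_near show "\<bar>ipnorm ip l - cmod c\<bar> \<le> d"
    by simp
qed

lemma eigenvector_if_approximate:
  assumes approx: "\<And>\<epsilon>. 0 < \<epsilon> \<Longrightarrow>
      \<exists>\<eta>. ipnorm ip \<eta> = 1 \<and> ipnorm ip (T \<eta> - l) < \<epsilon> \<and> ipnorm ip (T \<eta> - sc c \<eta>) < \<epsilon>"
  shows "T l = sc c l" and "ipnorm ip l = cmod c"
proof -
  define K where "K = opnorm ip T + cmod c + 1"
  have "1 \<le> K"
    using opnorm_nonneg by (simp add: K_def)
  have close: "ipnorm ip (T l - sc c l) \<le> \<epsilon> \<and> \<bar>ipnorm ip l - cmod c\<bar> \<le> \<epsilon>"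
    if "0 < \<epsilon>" for \<epsilon>
  proof -
    obtain \<eta> where "ipnorm ip \<eta> = 1"
      and "ipnorm ip (T \<eta> - l) < \<epsilon> / (2 * K)" and "ipnorm ip (T \<eta> - sc c \<eta>) < \<epsilon> / (2 * K)"
      using approx[of "\<epsilon> / (2 * K)"] \<open>0 < \<epsilon>\<close> \<open>1 \<le> K\<close> by auto
    then have d: "ipnorm ip (T \<eta> - l) + ipnorm ip (T \<eta> - sc c \<eta>) \<le> \<epsilon> / K"
      by (simp add: field_simps)
    have "(opnorm ip T + cmod c) * (\<epsilon> / K) \<le> K * (\<epsilon> / K)"
      using \<open>0 < \<epsilon>\<close> \<open>1 \<le> K\<close> by (intro mult_right_mono) (simp_all add: K_def)
    moreover have "\<epsilon> / K \<le> \<epsilon>"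
      using \<open>0 < \<epsilon>\<close> \<open>1 \<le> K\<close> by (simp add: divide_le_eq mult_le_cancel_left1)
    ultimately show ?thesis
      using approximate_eigenvector_defect[OF \<open>ipnorm ip \<eta> = 1\<close>, of l c] d \<open>1 \<le> K\<close>
        mult_left_mono[OF d, of "opnorm ip T + cmod c"] opnorm_nonneg
      by auto
  qed
  have "ipnorm ip (T l - sc c l) \<le> 0"
    by (rule field_le_epsilon) (simp add: close)
  then show "T l = sc c l"
    using ipnorm_nonneg[of "T l - sc c l"] ipnorm_eq_0_iff by simp
  have "\<bar>ipnorm ip l - cmod c\<bar> \<le> 0"
    by (rule field_le_epsilon) (simp add: close)
  then show "ipnorm ip l = cmod c"
    by simp
qed

end

definition positive_selfadjoint :: "('h \<Rightarrow> 'h) \<Rightarrow> bool" where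
  "positive_selfadjoint T \<longleftrightarrow> bounded_op sc ip T \<and> positive_op ip T \<and> is_adjoint ip T T"

context
  fixes T assumes psa: "positive_selfadjoint T"
begin

lemma positive_selfadjoint_bounded: "bounded_op sc ip T"
  using psa unfolding positive_selfadjoint_def by blast

lemma positive_selfadjoint_adjoint: "ip (T u) v = ip u (T v)"
  using psa unfolding positive_selfadjoint_def is_adjoint_def by blast

lemma positive_selfadjoint_Re_nonneg: "0 \<le> Re (ip (T u) u)"
  using psa unfolding positive_selfadjoint_def positive_op_def by blast

lemma positive_selfadjoint_hermitian_form: "positive_hermitian_form sc (\<lambda>u v. ip (T u) v)"
proof
  show "ip (T (u + v)) w = ip (T u) w + ip (T v) w" for u v w
    by (simp add: bounded_op_add[OF positive_selfadjoint_bounded] ip.add_left)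
  show "ip (T (sc c u)) v = c * ip (T u) v" for c u v
    by (simp add: bounded_op_scale[OF positive_selfadjoint_bounded] ip.scale_left)
  show "ip (T v) u = cnj (ip (T u) v)" for u v
    using positive_selfadjoint_adjoint[of v u] ip.hermitian[of "T u" v] by simp
qed (rule positive_selfadjoint_Re_nonneg)

lemma positive_selfadjoint_Cauchy_Schwarz:
  "(cmod (ip (T u) v))^2 \<le> Re (ip (T u) u) * Re (ip (T v) v)"
  by (rule positive_hermitian_form.Cauchy_Schwarz[OF positive_selfadjoint_hermitian_form])

(* For a unit vector u and N = ||T u||, Cauchy-Schwarz for the form [T.,.] gives
   N^4 = |[T u, T u]|^2 <= [T u, u] [T (T u), T u] <= M^2 N^2. *)
lemma opnorm_le_if_Re_ip_apply_le:
  assumes "0 \<le> M" and quadratic_le: "\<And>u. Re (ip (T u) u) \<le> M * (ipnorm ip u)^2"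
  shows "opnorm ip T \<le> M"
proof (rule opnorm_least)
  fix u assume "ipnorm ip u \<le> 1"
  define N where "N = ipnorm ip (T u)"
  have "Re (ip (T u) u) \<le> M"
    using quadratic_le[of u] \<open>0 \<le> M\<close> \<open>ipnorm ip u \<le> 1\<close> ipnorm_nonneg[of u]
    by (smt (verit) mult_left_le power_le_one zero_le_power2)
  moreover have "Re (ip (T (T u)) (T u)) \<le> M * N^2"
    unfolding N_def by (rule quadratic_le)
  ultimately have "Re (ip (T u) u) * Re (ip (T (T u)) (T u)) \<le> M * (M * N^2)"
    using positive_selfadjoint_Re_nonneg[of u] positive_selfadjoint_Re_nonneg[of "T u"]
    by (intro mult_mono) auto
  moreover have "(cmod (ip (T u) (T u)))^2 = N^2 * N^2"
    by (simp add: N_def cmod_ip_self power2_eq_square)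
  ultimately have "N^2 * N^2 \<le> M^2 * N^2"
    using positive_selfadjoint_Cauchy_Schwarz[of u "T u"] by (simp add: power2_eq_square mult.assoc)
  then have "N^2 \<le> M^2"
    by (metis mult_right_le_imp_le zero_less_power2 power_zero_numeral zero_le_power2)
  then show "ipnorm ip (T u) \<le> M"
    unfolding N_def using \<open>0 \<le> M\<close> by (rule power2_le_imp_le)
qed

lemma ipnorm_apply_minus_opnorm_power2:
  assumes "ipnorm ip \<xi> = 1"
  shows "(ipnorm ip (T \<xi> - sc (complex_of_real (opnorm ip T)) \<xi>))^2
           \<le> 2 * opnorm ip T * (opnorm ip T - Re (ip (T \<xi>) \<xi>))"
proof -
  define c where "c = opnorm ip T"
  have "0 \<le> c" "ipnorm ip (T \<xi>) \<le> c"
    using opnorm_nonneg[OF positive_selfadjoint_bounded]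
      ipnorm_apply_le[OF positive_selfadjoint_bounded, of \<xi>] assms
    by (simp_all add: c_def)
  then have "(ipnorm ip (T \<xi>))^2 \<le> c^2"
    using ipnorm_nonneg by (intro power_mono)
  moreover have "T \<xi> - sc (complex_of_real c) \<xi> = T \<xi> + sc (- complex_of_real c) \<xi>"
    by simp
  ultimately show ?thesis
    using ipnorm_add_scale_power2[of "T \<xi>" "- complex_of_real c" \<xi>] assms \<open>0 \<le> c\<close>
    by (simp add: c_def[symmetric] power2_eq_square algebra_simps)
qed

lemma eigenvector_if_Re_ip_apply_eq_opnorm:
  assumes "ipnorm ip \<xi> = 1" and "Re (ip (T \<xi>) \<xi>) = opnorm ip T"
  shows "T \<xi> = sc (complex_of_real (opnorm ip T)) \<xi>"
proof -
  have "(ipnorm ip (T \<xi> - sc (complex_of_real (opnorm ip T)) \<xi>))^2 \<le> 0"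
    using ipnorm_apply_minus_opnorm_power2[OF assms(1)] assms(2) by simp
  then show ?thesis
    using ipnorm_eq_0_iff by simp
qed

lemma Re_ip_apply_eq_opnorm_if_ipnorm_apply_eq:
  assumes "ipnorm ip \<xi> = 1" and "ipnorm ip (T \<xi>) = opnorm ip T"
  shows "Re (ip (T \<xi>) \<xi>) = opnorm ip T"
proof -
  define c Q where "c = opnorm ip T" and "Q = Re (ip (T \<xi>) \<xi>)"
  have "Q \<le> c"
    using Re_ip_apply_le[OF positive_selfadjoint_bounded, of \<xi>] assms(1) by (simp add: c_def Q_def)
  have "(c^2)^2 = (cmod (ip (T \<xi>) (T \<xi>)))^2"
    using assms(2) by (simp add: c_def cmod_ip_self)
  also have "\<dots> \<le> Q * Re (ip (T (T \<xi>)) (T \<xi>))"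
    unfolding Q_def by (rule positive_selfadjoint_Cauchy_Schwarz)
  also have "\<dots> \<le> Q * (c * c^2)"
    using Re_ip_apply_le[OF positive_selfadjoint_bounded, of "T \<xi>"] assms(2)
      positive_selfadjoint_Re_nonneg[of \<xi>]
    by (intro mult_left_mono) (simp_all add: c_def Q_def)
  finally have "c * c^3 \<le> Q * c^3"
    by (simp add: power2_eq_square power3_eq_cube algebra_simps)
  then have "c \<le> Q"
    using positive_selfadjoint_Re_nonneg[of \<xi>] opnorm_nonneg[OF positive_selfadjoint_bounded]
    by (cases "c = 0") (simp_all add: c_def Q_def)
  with \<open>Q \<le> c\<close> show ?thesis
    by (simp add: c_def Q_def)
qed

lemma Re_ip_apply_near_opnorm:
  assumes "0 < e" and "e < opnorm ip T"
  shows "\<exists>\<eta>. ipnorm ip \<eta> = 1 \<and> opnorm ip T - e < Re (ip (T \<eta>) \<eta>)"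
proof (rule ccontr)
  assume "\<not> ?thesis"
  then have unit_le: "\<And>\<eta>. ipnorm ip \<eta> = 1 \<Longrightarrow> Re (ip (T \<eta>) \<eta>) \<le> opnorm ip T - e"
    by force
  have "Re (ip (T u) u) \<le> (opnorm ip T - e) * (ipnorm ip u)^2" for u
  proof (cases "u = 0")
    case False
    define v where "v = sc (complex_of_real (1 / ipnorm ip u)) u"
    have "Re (ip (T v) v) = Re (ip (T u) u) / (ipnorm ip u)^2"
      by (simp add: v_def bounded_op_scale[OF positive_selfadjoint_bounded]
          ip.scale_left ip.scale_right power2_eq_square)
    then show ?thesis
      using unit_le[of v] ipnorm_normalize[OF False] ipnorm_pos[OF False]
      by (simp add: v_def divide_le_eq)
  qed (simp add: bounded_op_zero[OF positive_selfadjoint_bounded])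
  then have "opnorm ip T \<le> opnorm ip T - e"
    using assms by (intro opnorm_le_if_Re_ip_apply_le) auto
  with assms show False
    by simp
qed

lemma approximate_eigenvector_exists:
  assumes "0 < \<epsilon>" and "0 < opnorm ip T"
  shows "\<exists>\<eta>. ipnorm ip \<eta> = 1 \<and> ipnorm ip (T \<eta> - sc (complex_of_real (opnorm ip T)) \<eta>) < \<epsilon>"
proof -
  define c where "c = opnorm ip T"
  define e where "e = min (c / 2) (\<epsilon>^2 / (2 * c))"
  have "0 < e" "e < c"
    using assms by (simp_all add: e_def c_def)
  then obtain \<eta> where "ipnorm ip \<eta> = 1" and near: "c - e < Re (ip (T \<eta>) \<eta>)"
    using Re_ip_apply_near_opnorm unfolding c_def by blast
  have "(ipnorm ip (T \<eta> - sc (complex_of_real c) \<eta>))^2 \<le> 2 * c * (c - Re (ip (T \<eta>) \<eta>))"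
    using ipnorm_apply_minus_opnorm_power2[OF \<open>ipnorm ip \<eta> = 1\<close>]
    by (simp add: c_def)
  also have "\<dots> < 2 * c * e"
    using near assms by (simp add: c_def)
  also have "\<dots> \<le> \<epsilon>^2"
    using assms by (simp add: e_def c_def field_simps min_def)
  finally have "ipnorm ip (T \<eta> - sc (complex_of_real c) \<eta>) < \<epsilon>"
    using \<open>0 < \<epsilon>\<close> by (meson less_imp_le power_less_imp_less_base)
  with \<open>ipnorm ip \<eta> = 1\<close> show ?thesis
    unfolding c_def by blast
qed

end

lemma compact_opnorm_eigenvector_exists:
  assumes psa: "positive_selfadjoint T" and compact: "compact_op sc ip T" and "0 < opnorm ip T"
  shows "\<exists>l. T l = sc (complex_of_real (opnorm ip T)) l \<and> ipnorm ip l = opnorm ip T"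
proof -
  define c where "c = opnorm ip T"
  have "\<forall>n. \<exists>\<eta>. ipnorm ip \<eta> = 1 \<and>
      ipnorm ip (T \<eta> - sc (complex_of_real c) \<eta>) < inverse (real (Suc n))"
    using approximate_eigenvector_exists[OF psa] assms(3) by (simp add: c_def)
  then obtain \<eta> where unit: "\<And>n. ipnorm ip (\<eta> n) = 1"
    and near: "\<And>n. ipnorm ip (T (\<eta> n) - sc (complex_of_real c) (\<eta> n)) < inverse (real (Suc n))"
    by metis
  obtain r l where "strict_mono r" and conv: "converges_wrt (ipnorm ip) (\<lambda>n. T (\<eta> (r n))) l"
    using compact unit unfolding compact_op_def by (metis order_refl)
  have "\<exists>\<eta>'. ipnorm ip \<eta>' = 1 \<and> ipnorm ip (T \<eta>' - l) < \<epsilon> \<and>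
      ipnorm ip (T \<eta>' - sc (complex_of_real c) \<eta>') < \<epsilon>" if "0 < \<epsilon>" for \<epsilon>
  proof -
    obtain N where N: "\<And>k. N \<le> k \<Longrightarrow> ipnorm ip (T (\<eta> (r k)) - l) < \<epsilon>"
      using conv \<open>0 < \<epsilon>\<close> unfolding converges_wrt_def by blast
    obtain m :: nat where "0 < m" "inverse (real m) < \<epsilon>"
      using ex_inverse_of_nat_less[OF \<open>0 < \<epsilon>\<close>] by blast
    define k where "k = max N m"
    have "m \<le> Suc (r k)"
      using seq_suble[OF \<open>strict_mono r\<close>, of k] by (simp add: k_def)
    then have "inverse (real (Suc (r k))) < \<epsilon>"
      using \<open>0 < m\<close> \<open>inverse (real m) < \<epsilon>\<close>
      by (smt (verit) le_imp_inverse_le of_nat_0_less_iff of_nat_mono)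
    moreover have "N \<le> k"
      by (simp add: k_def)
    ultimately show ?thesis
      using unit[of "r k"] N near[of "r k"] by (intro exI[of _ "\<eta> (r k)"]) (meson less_trans)
  qed
  note eigenvector_if_approximate[OF positive_selfadjoint_bounded[OF psa] this]
  then have "T l = sc (complex_of_real c) l" and "ipnorm ip l = c"
    using assms(3) by (simp_all add: c_def)
  then show ?thesis
    unfolding c_def by blast
qed

lemma compact_positive_selfadjoint_attains_opnorm:
  assumes psa: "positive_selfadjoint T" and "compact_op sc ip T" and "(u0::'h) \<noteq> 0"
  shows "\<exists>\<xi>. ipnorm ip \<xi> = 1 \<and> Re (ip (T \<xi>) \<xi>) = opnorm ip T"
proof (cases "opnorm ip T = 0")
  case True
  define \<xi> where "\<xi> = sc (complex_of_real (1 / ipnorm ip u0)) u0"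
  have "ipnorm ip \<xi> = 1"
    using ipnorm_normalize[OF \<open>u0 \<noteq> 0\<close>] by (simp add: \<xi>_def)
  moreover have "Re (ip (T \<xi>) \<xi>) = 0"
    using Re_ip_apply_le[OF positive_selfadjoint_bounded[OF psa], of \<xi>]
      positive_selfadjoint_Re_nonneg[OF psa, of \<xi>] True
    by simp
  ultimately show ?thesis
    using True by auto
next
  case False
  define c where "c = opnorm ip T"
  have "0 < c"
    using False opnorm_nonneg[OF positive_selfadjoint_bounded[OF psa]] by (simp add: c_def)
  then obtain l where eigen: "T l = sc (complex_of_real c) l" and "ipnorm ip l = c"
    using compact_opnorm_eigenvector_exists[OF assms(1,2)] by (auto simp: c_def)
  define \<xi> where "\<xi> = sc (complex_of_real (1 / c)) l"
  have "ipnorm ip \<xi> = 1"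
    using \<open>ipnorm ip l = c\<close> \<open>0 < c\<close> by (simp add: \<xi>_def ipnorm_scale norm_divide)
  moreover have "Re (ip (T \<xi>) \<xi>) = c"
    using \<open>ipnorm ip l = c\<close> \<open>0 < c\<close>
    by (simp add: \<xi>_def eigen bounded_op_scale[OF positive_selfadjoint_bounded[OF psa]]
        ip.scale_left ip.scale_right ipnorm_power2[symmetric] power2_eq_square)
  ultimately show ?thesis
    unfolding c_def by blast
qed

end

locale hilbert_KH = pre_hilbert sc ip
  for sc :: "complex \<Rightarrow> 'h::ab_group_add \<Rightarrow> 'h" and ip +
  fixes scE :: "complex \<Rightarrow> 'e::ab_group_add \<Rightarrow> 'e" and act :: "('h \<Rightarrow> 'h) \<Rightarrow> 'e \<Rightarrow> 'e"
    and ipE :: "'e \<Rightarrow> 'e \<Rightarrow> ('h \<Rightarrow> 'h)"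
  assumes hilbert_KH_module: "hilbert_KH_module sc ip scE act ipE"
begin

sublocale E: module scE
  using hilbert_KH_module unfolding hilbert_KH_module_def module_iff_vector_space by blast

abbreviation mnorm :: "'e \<Rightarrow> real" where
  "mnorm \<equiv> module_norm ip ipE"

lemma ipE_compact: "compact_op sc ip (ipE x y)"
  and ipE_add_left: "ipE (x + y) z = (\<lambda>u. ipE x z u + ipE y z u)"
  and ipE_scale_left: "ipE (scE c x) y = (\<lambda>u. sc c (ipE x y u))"
  and ipE_self_eq_0_iff: "ipE x x = (\<lambda>u. 0) \<longleftrightarrow> x = 0"
  and ipE_self_positive: "positive_op ip (ipE x x)"
  using hilbert_KH_module unfolding hilbert_KH_module_def by blast+

lemma ipE_act_left: "compact_op sc ip a \<Longrightarrow> ipE (act a x) y = a \<circ> ipE x y"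
  using hilbert_KH_module unfolding hilbert_KH_module_def by blast

lemma ipE_adjoint: "ip (ipE x y u) v = ip u (ipE y x v)"
  using hilbert_KH_module unfolding hilbert_KH_module_def is_adjoint_def by blast

lemma ipE_bounded: "bounded_op sc ip (ipE x y)"
  using ipE_compact unfolding compact_op_def by blast

lemma ipE_self_positive_selfadjoint: "positive_selfadjoint (ipE x x)"
  unfolding positive_selfadjoint_def is_adjoint_def
  using ipE_bounded ipE_self_positive ipE_adjoint by blast

definition state_form :: "'h \<Rightarrow> 'e \<Rightarrow> 'e \<Rightarrow> complex" where
  "state_form \<xi> x y = ip (ipE x y \<xi>) \<xi>"

lemma state_form_positive_hermitian: "positive_hermitian_form scE (state_form \<xi>)"
proof
  show "state_form \<xi> (x + y) z = state_form \<xi> x z + state_form \<xi> y z" for x y z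
    by (simp add: state_form_def ipE_add_left ip.add_left)
  show "state_form \<xi> (scE c x) y = c * state_form \<xi> x y" for c x y
    by (simp add: state_form_def ipE_scale_left ip.scale_left)
  show "state_form \<xi> y x = cnj (state_form \<xi> x y)" for x y
    using ipE_adjoint[of x y \<xi> \<xi>] ip.hermitian[of \<xi> "ipE y x \<xi>"] by (simp add: state_form_def)
  show "0 \<le> Re (state_form \<xi> x x)" for x
    unfolding state_form_def
    by (rule positive_selfadjoint_Re_nonneg[OF ipE_self_positive_selfadjoint])
qed

sublocale F: positive_hermitian_form scE "state_form \<xi>" for \<xi>
  by (rule state_form_positive_hermitian)

lemma mnorm_power2: "(mnorm x)^2 = opnorm ip (ipE x x)"
  using opnorm_nonneg[OF ipE_bounded] by (simp add: module_norm_def)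

lemma mnorm_nonneg: "0 \<le> mnorm x"
  using opnorm_nonneg[OF ipE_bounded] by (simp add: module_norm_def)

lemma Re_state_form_le: "Re (state_form \<xi> x x) \<le> (mnorm x)^2 * (ipnorm ip \<xi>)^2"
  unfolding state_form_def mnorm_power2 by (rule Re_ip_apply_le[OF ipE_bounded])

lemma mnorm_eq_0_iff: "mnorm x = 0 \<longleftrightarrow> x = 0"
proof
  assume "mnorm x = 0"
  then have "ipnorm ip (ipE x x u) = 0" for u
    using ipnorm_apply_le[OF ipE_bounded, of x x u] ipnorm_nonneg[of "ipE x x u"] mnorm_power2[of x]
    by simp
  then show "x = 0"
    using ipE_self_eq_0_iff[of x] by (simp add: ipnorm_eq_0_iff fun_eq_iff)
next
  assume "x = 0"
  then have "opnorm ip (ipE x x) \<le> 0"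
    using ipE_self_eq_0_iff[of x] by (intro opnorm_least) simp
  then show "mnorm x = 0"
    by (simp flip: mnorm_power2)
qed

lemma Re_state_form_add_scale_le:
  "Re (state_form \<xi> (x + scE c y) (x + scE c y))
     \<le> (mnorm x + cmod c * mnorm y)^2 * (ipnorm ip \<xi>)^2"
proof -
  define n where "n = (ipnorm ip \<xi>)^2"
  have "cmod (state_form \<xi> x y) \<le> mnorm x * mnorm y * n"
  proof (rule power2_le_imp_le)
    have "(cmod (state_form \<xi> x y))^2 \<le> ((mnorm x)^2 * n) * ((mnorm y)^2 * n)"
      using F.Cauchy_Schwarz[of \<xi> x y] Re_state_form_le[of \<xi> x] Re_state_form_le[of \<xi> y]
        F.Re_nonneg[of \<xi> x] F.Re_nonneg[of \<xi> y]
      by (smt (verit) mult_mono n_def)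
    then show "(cmod (state_form \<xi> x y))^2 \<le> (mnorm x * mnorm y * n)^2"
      by (simp add: power2_eq_square algebra_simps)
  qed (simp add: mnorm_nonneg n_def)
  moreover have "Re (cnj c * state_form \<xi> x y) \<le> cmod c * cmod (state_form \<xi> x y)"
    using complex_Re_le_cmod[of "cnj c * state_form \<xi> x y"] by (simp add: norm_mult)
  ultimately have cross: "Re (cnj c * state_form \<xi> x y) \<le> cmod c * (mnorm x * mnorm y * n)"
    by (smt (verit) mult_left_mono norm_ge_zero)
  have "Re (state_form \<xi> (x + scE c y) (x + scE c y))
      = Re (state_form \<xi> x x) + 2 * Re (cnj c * state_form \<xi> x y)
        + (cmod c)^2 * Re (state_form \<xi> y y)"
    by (rule F.Re_add_scale)
  also have "\<dots> \<le> (mnorm x)^2 * n + 2 * (cmod c * (mnorm x * mnorm y * n))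
      + (cmod c)^2 * ((mnorm y)^2 * n)"
    using Re_state_form_le[of \<xi> x] Re_state_form_le[of \<xi> y] cross
    by (intro add_mono mult_left_mono) (simp_all add: n_def)
  also have "\<dots> = (mnorm x + cmod c * mnorm y)^2 * (ipnorm ip \<xi>)^2"
    by (simp add: n_def power2_eq_square algebra_simps)
  finally show ?thesis .
qed

lemma mnorm_add_scale_le: "mnorm (x + scE c y) \<le> mnorm x + cmod c * mnorm y"
proof -
  have "opnorm ip (ipE (x + scE c y) (x + scE c y)) \<le> (mnorm x + cmod c * mnorm y)^2"
    using Re_state_form_add_scale_le unfolding state_form_def
    by (intro opnorm_le_if_Re_ip_apply_le[OF ipE_self_positive_selfadjoint]) simp_all
  then show ?thesis
    unfolding mnorm_power2[symmetric]
    by (rule power2_le_imp_le) (simp add: mnorm_nonneg)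
qed

lemma ip_ipE_self_apply_eq:
  assumes "ipnorm ip \<xi> = 1" and "Re (state_form \<xi> x x) = (mnorm x)^2"
  shows "ip (ipE x x (ipE x y \<xi>)) \<xi> = complex_of_real ((mnorm x)^2) * state_form \<xi> x y"
proof -
  have "ipE x x \<xi> = sc (complex_of_real ((mnorm x)^2)) \<xi>"
    using eigenvector_if_Re_ip_apply_eq_opnorm[OF ipE_self_positive_selfadjoint assms(1)] assms(2)
    by (simp add: state_form_def mnorm_power2)
  then show ?thesis
    using positive_selfadjoint_adjoint[OF ipE_self_positive_selfadjoint, of x "ipE x y \<xi>" \<xi>]
    by (simp add: state_form_def ip.scale_right)
qed

lemma norm_parallel_if_state_form_extremal:
  assumes "ipnorm ip \<xi> = 1" and "x \<noteq> 0" and "y \<noteq> 0"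
    and "Re (state_form \<xi> x x) = (mnorm x)^2"
    and "cmod (state_form \<xi> x y) = mnorm x * mnorm y"
  shows "norm_parallel scE mnorm x y"
proof -
  have "0 < mnorm x" "0 < mnorm y"
    using assms(2,3) mnorm_nonneg mnorm_eq_0_iff by (simp_all add: less_le)
  have "(mnorm x)^2 * (mnorm y)^2 \<le> (mnorm x)^2 * Re (state_form \<xi> y y)"
    using F.Cauchy_Schwarz[of \<xi> x y] assms(4,5) by (simp add: power_mult_distrib)
  then have "(mnorm y)^2 \<le> Re (state_form \<xi> y y)"
    using \<open>0 < mnorm x\<close> by simp
  define l where "l = sgn (state_form \<xi> x y)"
  have "state_form \<xi> x y \<noteq> 0"
    using assms(5) \<open>0 < mnorm x\<close> \<open>0 < mnorm y\<close> by auto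
  then have "cmod l = 1"
    by (simp add: l_def norm_sgn)
  have "(mnorm x + mnorm y)^2 \<le> Re (state_form \<xi> (x + scE l y) (x + scE l y))"
    using F.Re_add_sgn_scale[OF \<open>state_form \<xi> x y \<noteq> 0\<close>] assms(4,5)
      \<open>(mnorm y)^2 \<le> Re (state_form \<xi> y y)\<close>
    by (simp add: l_def power2_sum)
  also have "\<dots> \<le> (mnorm (x + scE l y))^2"
    using Re_state_form_le[of \<xi> "x + scE l y"] assms(1) by simp
  finally have "mnorm x + mnorm y \<le> mnorm (x + scE l y)"
    by (rule power2_le_imp_le) (simp add: mnorm_nonneg)
  moreover have "mnorm (x + scE l y) \<le> mnorm x + mnorm y"
    using mnorm_add_scale_le[of x l y] \<open>cmod l = 1\<close> by simp
  ultimately show ?thesis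
    unfolding norm_parallel_def using \<open>cmod l = 1\<close> by (intro exI[of _ l]) simp
qed

(* With w = <x,x> x one has <w,y> = <x,x><x,y> and <w,w> = <x,x>^3. *)
lemma cmod_ip_ipE_self_apply_le:
  assumes "ipnorm ip \<xi> = 1"
  shows "cmod (ip (ipE x x (ipE x y \<xi>)) \<xi>) \<le> mnorm x * ipnorm ip (ipE x x \<xi>) * mnorm y"
proof -
  define A w where "A = ipE x x" and "w = act A x"
  have psa: "positive_selfadjoint A"
    unfolding A_def by (rule ipE_self_positive_selfadjoint)
  have ipE_w: "ipE w z = A \<circ> ipE x z" for z
    unfolding w_def A_def by (rule ipE_act_left[OF ipE_compact])
  have "state_form \<xi> w w = ip (ipE x w \<xi>) (A \<xi>)"
    by (simp add: state_form_def ipE_w positive_selfadjoint_adjoint[OF psa])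
  also have "\<dots> = ip \<xi> (A (A (A \<xi>)))"
    by (simp add: ipE_adjoint ipE_w A_def)
  also have "\<dots> = cnj (ip (A (A \<xi>)) (A \<xi>))"
    using positive_selfadjoint_adjoint[OF psa] ip.hermitian by metis
  finally have "Re (state_form \<xi> w w) \<le> (mnorm x)^2 * (ipnorm ip (A \<xi>))^2"
    using Re_ip_apply_le[OF positive_selfadjoint_bounded[OF psa], of "A \<xi>"]
    by (simp add: A_def mnorm_power2)
  then have "(cmod (state_form \<xi> w y))^2 \<le> ((mnorm x)^2 * (ipnorm ip (A \<xi>))^2) * (mnorm y)^2"
    using F.Cauchy_Schwarz[of \<xi> w y] Re_state_form_le[of \<xi> y] F.Re_nonneg[of \<xi> w]
      F.Re_nonneg[of \<xi> y] assms
    by (smt (verit) mult_mono mult_cancel_left1 power_one)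
  then have "(cmod (state_form \<xi> w y))^2 \<le> (mnorm x * ipnorm ip (A \<xi>) * mnorm y)^2"
    by (simp add: power_mult_distrib)
  then have "cmod (state_form \<xi> w y) \<le> mnorm x * ipnorm ip (A \<xi>) * mnorm y"
    by (rule power2_le_imp_le) (simp add: mnorm_nonneg ipnorm_nonneg)
  moreover have "ip (A (ipE x y \<xi>)) \<xi> = state_form \<xi> w y"
    by (simp add: state_form_def ipE_w)
  ultimately show ?thesis
    by (simp add: A_def)
qed

lemma norm_parallel_if_extremal_vector:
  assumes "ipnorm ip \<xi> = 1"
    and extremal: "cmod (ip (ipE x x (ipE x y \<xi>)) \<xi>) = mnorm x ^ 3 * mnorm y"
  shows "norm_parallel scE mnorm x y"
proof (cases "x = 0 \<or> y = 0")
  case True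
  then show ?thesis
    unfolding norm_parallel_def by (intro exI[of _ 1]) (auto simp: mnorm_eq_0_iff)
next
  case False
  then have "0 < mnorm x" "0 < mnorm y"
    using mnorm_nonneg mnorm_eq_0_iff by (simp_all add: less_le)
  have "mnorm x * (mnorm x)^2 * mnorm y \<le> mnorm x * ipnorm ip (ipE x x \<xi>) * mnorm y"
    using cmod_ip_ipE_self_apply_le[OF assms(1), of x y] extremal
    by (simp add: power3_eq_cube power2_eq_square)
  then have "opnorm ip (ipE x x) \<le> ipnorm ip (ipE x x \<xi>)"
    using \<open>0 < mnorm x\<close> \<open>0 < mnorm y\<close> by (simp add: mnorm_power2)
  moreover have "ipnorm ip (ipE x x \<xi>) \<le> opnorm ip (ipE x x)"
    using ipnorm_apply_le[OF ipE_bounded, of x x \<xi>] assms(1) by simp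
  ultimately have "Re (state_form \<xi> x x) = (mnorm x)^2"
    using Re_ip_apply_eq_opnorm_if_ipnorm_apply_eq[OF ipE_self_positive_selfadjoint assms(1)]
    by (simp add: state_form_def mnorm_power2)
  moreover have "cmod (state_form \<xi> x y) = mnorm x * mnorm y"
    using ip_ipE_self_apply_eq[OF assms(1) \<open>Re (state_form \<xi> x x) = (mnorm x)^2\<close>, of y] extremal
      \<open>0 < mnorm x\<close> by (simp add: norm_mult power3_eq_cube power2_eq_square)
  ultimately show ?thesis
    using norm_parallel_if_state_form_extremal[OF assms(1)] False by blast
qed

lemma extremal_vector_if_norm_parallel:
  assumes "(u0::'h) \<noteq> 0" and "norm_parallel scE mnorm x y"
  shows "\<exists>\<xi>. ipnorm ip \<xi> = 1 \<and> cmod (ip (ipE x x (ipE x y \<xi>)) \<xi>) = mnorm x ^ 3 * mnorm y"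
proof -
  obtain l where "cmod l = 1" and parallel: "mnorm (x + scE l y) = mnorm x + mnorm y"
    using assms(2) unfolding norm_parallel_def by blast
  define z where "z = x + scE l y"
  obtain \<xi> where "ipnorm ip \<xi> = 1" and attains: "Re (ip (ipE z z \<xi>) \<xi>) = opnorm ip (ipE z z)"
    using compact_positive_selfadjoint_attains_opnorm
        [OF ipE_self_positive_selfadjoint ipE_compact assms(1)]
    by blast
  have "Re (state_form \<xi> z z) = (mnorm x + mnorm y)^2"
    using attains mnorm_power2[of z] parallel by (simp add: state_form_def z_def)
  moreover have "Re (state_form \<xi> x x) \<le> (mnorm x)^2" and "Re (state_form \<xi> y y) \<le> (mnorm y)^2"
    using Re_state_form_le[of \<xi> x] Re_state_form_le[of \<xi> y] \<open>ipnorm ip \<xi> = 1\<close> by simp_all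
  ultimately have "Re (state_form \<xi> x x) = (mnorm x)^2"
    and "cmod (state_form \<xi> x y) = mnorm x * mnorm y"
    using F.extremal_if_Re_add_scale_eq[of \<xi> x "mnorm x" y "mnorm y" l] \<open>cmod l = 1\<close> mnorm_nonneg
    by (simp_all add: z_def)
  then have "cmod (ip (ipE x x (ipE x y \<xi>)) \<xi>) = mnorm x ^ 3 * mnorm y"
    using ip_ipE_self_apply_eq[OF \<open>ipnorm ip \<xi> = 1\<close>]
    by (simp add: norm_mult power3_eq_cube power2_eq_square)
  with \<open>ipnorm ip \<xi> = 1\<close> show ?thesis
    by blast
qed

end

theorem theorem2p1:
  fixes scH :: "complex \<Rightarrow> 'h::ab_group_add \<Rightarrow> 'h"
    and ip :: "'h \<Rightarrow> 'h \<Rightarrow> complex"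
    and scE :: "complex \<Rightarrow> 'e::ab_group_add \<Rightarrow> 'e"
    and act :: "('h \<Rightarrow> 'h) \<Rightarrow> 'e \<Rightarrow> 'e"
    and ipE :: "'e \<Rightarrow> 'e \<Rightarrow> ('h \<Rightarrow> 'h)"
    and x y :: 'e
  assumes "hilbert_space scH ip"
    and "\<exists>u::'h. u \<noteq> 0"
    and "hilbert_KH_module scH ip scE act ipE"
  shows "norm_parallel scE (module_norm ip ipE) x y \<longleftrightarrow>
    (\<exists>\<xi>. ipnorm ip \<xi> = 1 \<and>
       cmod (ip (ipE x x (ipE x y \<xi>)) \<xi>) =
         module_norm ip ipE x ^ 3 * module_norm ip ipE y)"
proof -
  interpret hilbert_KH scH ip scE act ipE
    using assms(1,3) unfolding hilbert_KH_def hilbert_KH_axioms_def pre_hilbert_def hilbert_space_def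
    by blast
  show ?thesis
    using assms(2) extremal_vector_if_norm_parallel norm_parallel_if_extremal_vector by blast
qed

end
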